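(* Let $k\in K\setminus\{\mathbf{0},\mathbf{1}\}$ and let $\varphi=\psi\,\widetilde{U}\,\xi$, or $\varphi=\square\psi$, or $\varphi=\psi U\xi$, with $\psi,\xi\in k\text{-}stLTL(K,AP)$. Then for every $w\in(\mathcal{P}(AP))^{\omega}$: $(\|\varphi\|,w)\geq k$ iff $w\models\varphi_{b}$.
   Context: $(K,+,\cdot,Val^{\omega},\mathbf{0},\mathbf{1})$ is an idempotent ordered totally generalized product $\omega$-valuation monoid: $(K,+,\mathbf{0})$ is a complete idempotent monoid whose natural order ($k\leq k'$ iff $k'=k'+k$) is total; $Val^{\omega}$ maps infinite sequences over finite subsets of $K$ to $K$, with $Val^{\omega}((k_i)_i)=\mathbf{0}$ whenever some $k_i=\mathbf{0}$ and $Val^{\omega}(\mathbf{1}^{\omega})=\mathbf{1}$; $\cdot$ has $\mathbf{0}$ absorbing and $\mathbf{1}$ neutral; $\sum_I(k\cdot\mathbf{1})=k\cdot\sum_I\mathbf{1}$; $Val^{\omega}$ distributes over finite sums $\sum_{i_j\in I_j}k_{i_j}$ (over finite $L\subseteq K$) whenever for each $j$ all $k_{i_j}$ lie in $L\setminus\{\mathbf{0},\mathbf{1}\}$ or all lie in $\{\mathbf{0},\mathbf{1}\}$. Moreover $Val^{\omega}(\mathbf{1},k_1,k_2,\ldots)=Val^{\omega}(k_1,k_2,\ldots)$, $k=Val^{\omega}(k,\mathbf{1},\mathbf{1},\ldots)$, $k\leq\mathbf{1}$ for all $k$, and $Val^{\omega}(k_0,k_1,\ldots)\geq k$ whenever $k_i\geq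 k$ for all $i$. $AP$ is a finite set of atomic propositions. Weighted LTL formulas over $AP$ and $K$ have semantics $\|\cdot\|$ in $K^{(\mathcal{P}(AP))^{\omega}}$: $(\|k'\|,w)=k'$; $(\|a\|,w)=\mathbf{1}$ if $a\in w(0)$ else $\mathbf{0}$ (dually for $\lnot a$); $\vee$ is $+$, $\wedge$ is $\cdot$; $(\|\bigcirc\varphi\|,w)=(\|\varphi\|,w_{\geq1})$; $(\|\varphi U\psi\|,w)=\sum_{i\geq0}Val^{\omega}((\|\varphi\|,w_{\geq0}),\ldots,(\|\varphi\|,w_{\geq i-1}),(\|\psi\|,w_{\geq i}),\mathbf{1},\mathbf{1},\ldots)$; $(\|\square\varphi\|,w)=Val^{\omega}((\|\varphi\|,w_{\geq i}))_{i\geq0}$; $\varphi\widetilde{U}\psi:=\square\varphi\vee(\varphi U\psi)$. $sbLTL(K,AP)$ is given by $\varphi::=true\mid a\mid\lnot a\mid\varphi\vee\varphi\mid\varphi\wedge\varphi\mid\bigcirc\varphi\mid\varphi\widetilde{U}\varphi\mid\square\varphi$ ($true=\mathbf{1}$); its semantics are $\{\mathbf{0},\mathbf{1}\}$-valued and coincide with classical LTL satisfaction. $k\text{-}stLTL(K,AP)$ consists of formulas $\bigvee_{1\leq i\leq n}(k_i\wedge\varphi_i)$ with $k_i\geq k$, $k_i\notin\{\mathbf{0},\mathbf{1}\}$, $\varphi_i\in sbLTL(K,AP)$. For such $\varphi$, $\varphi_b:=\bigvee_i\varphi_i$; for $\varphi=\psi\widetilde{U}\xi$, $\square\psi$, $\psi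 U\xi$ with $\psi,\xi\in k\text{-}stLTL(K,AP)$, $\varphi_b$ is respectively $\psi_b\widetilde{U}\xi_b$, $\square\psi_b$, $\psi_bU\xi_b$, read as classical LTL formulas, and $w\models\varphi_b$ means classical satisfaction at position 0. *)

theory Defs
  imports Main
begin

text \<open>
  The weight structure K is an idempotent complete monoid whose natural order is total.
  Its infinitary sum coincides with the supremum in the natural order, so we model K
  by a type of class complete_linorder with sum = Sup, 0 = bot; since k \<le> 1 for all k,
  1 = top.
\<close>

definition ioggpvm :: "('k::complete_linorder \<Rightarrow> 'k \<Rightarrow> 'k) \<Rightarrow> ((nat \<Rightarrow> 'k) \<Rightarrow> 'k) \<Rightarrow> bool" where
  "ioggpvm mult Val \<longleftrightarrow>
     (\<forall>f. finite (range f) \<longrightarrow> (\<exists>i. f i = bot) \<longrightarrow> Val f = bot)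
   \<and> Val (\<lambda>_. top) = top
   \<and> (\<forall>k. mult bot k = bot \<and> mult k bot = bot)
   \<and> (\<forall>k. mult top k = k \<and> mult k top = k)
   \<and> (\<forall>k (I::nat set). Sup ((\<lambda>i. mult k top) ` I) = mult k (Sup ((\<lambda>i. top) ` I)))
   \<and> (\<forall>(L::'k set) (A::nat \<Rightarrow> 'k set). finite L \<longrightarrow>
        (\<forall>j. A j \<subseteq> L \<and> (A j \<subseteq> L - {bot, top} \<or> A j \<subseteq> {bot, top})) \<longrightarrow>
        Val (\<lambda>j. Sup (A j)) = Sup {Val f | f. \<forall>j. f j \<in> A j})
   \<and> (\<forall>f. finite (range f) \<longrightarrow> Val (case_nat top f) = Val f)
   \<and> (\<forall>k. Val (case_nat k (\<lambda>_. top)) = k)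
   \<and> (\<forall>f k. finite (range f) \<longrightarrow> (\<forall>i. k \<le> f i) \<longrightarrow> k \<le> Val f)"

datatype ('a, 'k) wltl =
    Const 'k
  | Atom 'a
  | NAtom 'a
  | Or "('a, 'k) wltl" "('a, 'k) wltl"
  | And "('a, 'k) wltl" "('a, 'k) wltl"
  | Next "('a, 'k) wltl"
  | Until "('a, 'k) wltl" "('a, 'k) wltl"
  | Box "('a, 'k) wltl"

definition WUntil :: "('a, 'k) wltl \<Rightarrow> ('a, 'k) wltl \<Rightarrow> ('a, 'k) wltl" where
  "WUntil \<phi> \<psi> = Or (Box \<phi>) (Until \<phi> \<psi>)"

definition sfx :: "nat \<Rightarrow> (nat \<Rightarrow> 'a set) \<Rightarrow> (nat \<Rightarrow> 'a set)" where
  "sfx i w = (\<lambda>j. w (i + j))"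

fun sem :: "('k::complete_linorder \<Rightarrow> 'k \<Rightarrow> 'k) \<Rightarrow> ((nat \<Rightarrow> 'k) \<Rightarrow> 'k)
            \<Rightarrow> ('a, 'k) wltl \<Rightarrow> (nat \<Rightarrow> 'a set) \<Rightarrow> 'k" where
  "sem mult Val (Const c) w = c"
| "sem mult Val (Atom a) w = (if a \<in> w 0 then top else bot)"
| "sem mult Val (NAtom a) w = (if a \<in> w 0 then bot else top)"
| "sem mult Val (Or \<phi> \<psi>) w = sup (sem mult Val \<phi> w) (sem mult Val \<psi> w)"
| "sem mult Val (And \<phi> \<psi>) w = mult (sem mult Val \<phi> w) (sem mult Val \<psi> w)"
| "sem mult Val (Next \<phi>) w = sem mult Val \<phi> (sfx 1 w)"
| "sem mult Val (Until \<phi> \<psi>) w =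
     (SUP i. Val (\<lambda>j. if j < i then sem mult Val \<phi> (sfx j w)
                     else if j = i then sem mult Val \<psi> (sfx i w) else top))"
| "sem mult Val (Box \<phi>) w = Val (\<lambda>i. sem mult Val \<phi> (sfx i w))"

inductive sbLTL :: "('a, 'k::complete_linorder) wltl \<Rightarrow> bool" where
  "sbLTL (Const top)"
| "sbLTL (Atom a)"
| "sbLTL (NAtom a)"
| "sbLTL \<phi> \<Longrightarrow> sbLTL \<psi> \<Longrightarrow> sbLTL (Or \<phi> \<psi>)"
| "sbLTL \<phi> \<Longrightarrow> sbLTL \<psi> \<Longrightarrow> sbLTL (And \<phi> \<psi>)"
| "sbLTL \<phi> \<Longrightarrow> sbLTL (Next \<phi>)"
| "sbLTL \<phi> \<Longrightarrow> sbLTL \<psi> \<Longrightarrow> sbLTL (WUntil \<phi> \<psi>)"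
| "sbLTL \<phi> \<Longrightarrow> sbLTL (Box \<phi>)"

fun holds :: "('a, 'k::complete_linorder) wltl \<Rightarrow> (nat \<Rightarrow> 'a set) \<Rightarrow> bool" where
  "holds (Const c) w = (c = top)"
| "holds (Atom a) w = (a \<in> w 0)"
| "holds (NAtom a) w = (a \<notin> w 0)"
| "holds (Or \<phi> \<psi>) w = (holds \<phi> w \<or> holds \<psi> w)"
| "holds (And \<phi> \<psi>) w = (holds \<phi> w \<and> holds \<psi> w)"
| "holds (Next \<phi>) w = holds \<phi> (sfx 1 w)"
| "holds (Until \<phi> \<psi>) w = (\<exists>i. (\<forall>j<i. holds \<phi> (sfx j w)) \<and> holds \<psi> (sfx i w))"
| "holds (Box \<phi>) w = (\<forall>i. holds \<phi> (sfx i w))"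

text \<open>A k-stLTL formula \<Or>_{1\<le>i\<le>n} (k_i \<and> \<phi>_i) is given by the nonempty list [(k_1,\<phi>_1),...,(k_n,\<phi>_n)].\<close>
fun stdisj :: "('k \<times> ('a, 'k) wltl) list \<Rightarrow> ('a, 'k::complete_linorder) wltl" where
  "stdisj [] = Const bot"
| "stdisj [(c, \<phi>)] = And (Const c) \<phi>"
| "stdisj ((c, \<phi>) # xs) = Or (And (Const c) \<phi>) (stdisj xs)"

text \<open>The boolean part \<phi>_b = \<Or>_i \<phi>_i.\<close>
fun bdisj :: "('k \<times> ('a, 'k) wltl) list \<Rightarrow> ('a, 'k::complete_linorder) wltl" where
  "bdisj [] = Const bot"
| "bdisj [(c, \<phi>)] = \<phi>"
| "bdisj ((c, \<phi>) # xs) = Or \<phi> (bdisj xs)"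

definition kst :: "'k::complete_linorder \<Rightarrow> ('k \<times> ('a, 'k) wltl) list \<Rightarrow> bool" where
  "kst k xs \<longleftrightarrow> xs \<noteq> [] \<and>
     (\<forall>(c, \<phi>) \<in> set xs. k \<le> c \<and> c \<noteq> bot \<and> c \<noteq> top \<and> sbLTL \<phi>)"

end

theory Submission
  imports Defs
begin

text \<open>
  Say that f indicates P at level k if f w \<ge> k where P w holds and f w = bot elsewhere; for
  k \<noteq> bot this means exactly k \<le> f w \<longleftrightarrow> P w.  Boolean formulas indicate their classical
  semantics at level top, so a k-stLTL formula indicates its boolean part at level k and takes
  only finitely many values.  Box and Until preserve indicators of finite range, since Val of a
  finite-range sequence containing bot is bot and Val of one bounded below by k is at least k.
\<close>

lemma
  assumes "ioggpvm mult Val"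
  shows ioggpvm_Val_bot: "\<And>f i. finite (range f) \<Longrightarrow> f i = bot \<Longrightarrow> Val f = bot"
    and ioggpvm_bot_mult: "\<And>c. mult bot c = bot"
    and ioggpvm_mult_bot: "\<And>c. mult c bot = bot"
    and ioggpvm_mult_top: "\<And>c. mult c top = c"
    and ioggpvm_Val_lower_bound:
      "\<And>f c. finite (range f) \<Longrightarrow> (\<And>i. c \<le> f i) \<Longrightarrow> c \<le> Val f"
  using assms unfolding ioggpvm_def by (elim conjE; metis)+

definition indicates :: "'k::complete_linorder \<Rightarrow> ('w \<Rightarrow> 'k) \<Rightarrow> ('w \<Rightarrow> bool) \<Rightarrow> bool" where
  "indicates k f P \<longleftrightarrow> (\<forall>w. (P w \<longrightarrow> k \<le> f w) \<and> (\<not> P w \<longrightarrow> f w = bot))"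

lemma indicates_iff:
  assumes "indicates k f P" and "k \<noteq> bot"
  shows "k \<le> f w \<longleftrightarrow> P w"
  using assms unfolding indicates_def by (metis bot_unique)

lemma finite_range_indicates_top:
  assumes "indicates top f P"
  shows "finite (range f)"
proof (rule finite_subset)
  show "range f \<subseteq> {bot, top}"
    using assms by (auto simp: indicates_def top_unique)
qed simp

lemma indicates_sem_Or:
  assumes "indicates k (sem mult Val \<phi>) (holds h\<phi>)"
    and "indicates k (sem mult Val \<psi>) (holds h\<psi>)"
  shows "indicates k (sem mult Val (Or \<phi> \<psi>)) (holds (Or h\<phi> h\<psi>))"
  using assms by (auto simp: indicates_def le_supI1 le_supI2)

lemma indicates_sem_Box:
  assumes V: "ioggpvm mult Val"
    and fin: "finite (range (sem mult Val \<phi>))"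
    and ind: "indicates k (sem mult Val \<phi>) (holds h)"
  shows "indicates k (sem mult Val (Box \<phi>)) (holds (Box h))"
  unfolding indicates_def
proof (intro allI conjI impI)
  fix w
  let ?f = "\<lambda>i. sem mult Val \<phi> (sfx i w)"
  have fin_f: "finite (range ?f)"
    by (rule finite_subset[OF _ fin]) auto
  show "k \<le> sem mult Val (Box \<phi>) w" if "holds (Box h) w"
    using that ind ioggpvm_Val_lower_bound[OF V fin_f] by (simp add: indicates_def)
  show "sem mult Val (Box \<phi>) w = bot" if "\<not> holds (Box h) w"
  proof -
    from that obtain i where "\<not> holds h (sfx i w)" by auto
    with ind have "?f i = bot" by (simp add: indicates_def)
    then show ?thesis using ioggpvm_Val_bot[OF V fin_f] by simp
  qed
qed

lemma indicates_sem_Until: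
  assumes V: "ioggpvm mult Val"
    and fin\<phi>: "finite (range (sem mult Val \<phi>))" and fin\<psi>: "finite (range (sem mult Val \<psi>))"
    and ind\<phi>: "indicates k (sem mult Val \<phi>) (holds h\<phi>)"
    and ind\<psi>: "indicates k (sem mult Val \<psi>) (holds h\<psi>)"
  shows "indicates k (sem mult Val (Until \<phi> \<psi>)) (holds (Until h\<phi> h\<psi>))"
  unfolding indicates_def
proof (intro allI conjI impI)
  fix w
  define s where "s i = (\<lambda>j. if j < i then sem mult Val \<phi> (sfx j w)
                     else if j = i then sem mult Val \<psi> (sfx i w) else top)" for i
  have sem_Until: "sem mult Val (Until \<phi> \<psi>) w = (SUP i. Val (s i))"
    by (simp add: s_def)
  have fin_s: "finite (range (s i))" for i
    by (rule finite_subset[of _ "insert top (range (sem mult Val \<phi>) \<union> range (sem mult Val \<psi>))"])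
       (auto simp: s_def fin\<phi> fin\<psi>)
  show "k \<le> sem mult Val (Until \<phi> \<psi>) w" if "holds (Until h\<phi> h\<psi>) w"
  proof -
    from that obtain i where "\<forall>j<i. holds h\<phi> (sfx j w)" and "holds h\<psi> (sfx i w)" by auto
    with ind\<phi> ind\<psi> have "k \<le> s i j" for j
      by (auto simp: s_def indicates_def)
    then have "k \<le> Val (s i)" by (rule ioggpvm_Val_lower_bound[OF V fin_s])
    also have "\<dots> \<le> (SUP i. Val (s i))" by (rule SUP_upper) simp
    finally show ?thesis by (simp only: sem_Until)
  qed
  show "sem mult Val (Until \<phi> \<psi>) w = bot" if "\<not> holds (Until h\<phi> h\<psi>) w"
  proof -
    have "Val (s i) = bot" for i
    proof (cases "\<forall>j<i. holds h\<phi> (sfx j w)")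
      case True
      with that have "s i i = bot" using ind\<psi> by (auto simp: s_def indicates_def)
      then show ?thesis by (rule ioggpvm_Val_bot[OF V fin_s])
    next
      case False
      then obtain j where "j < i" and "\<not> holds h\<phi> (sfx j w)" by blast
      with ind\<phi> have "s i j = bot" by (simp add: s_def indicates_def)
      then show ?thesis by (rule ioggpvm_Val_bot[OF V fin_s])
    qed
    then show ?thesis unfolding sem_Until by simp
  qed
qed

lemma indicates_sem_WUntil:
  assumes "ioggpvm mult Val"
    and "finite (range (sem mult Val \<phi>))" and "finite (range (sem mult Val \<psi>))"
    and "indicates k (sem mult Val \<phi>) (holds h\<phi>)"
    and "indicates k (sem mult Val \<psi>) (holds h\<psi>)"
  shows "indicates k (sem mult Val (WUntil \<phi> \<psi>)) (holds (WUntil h\<phi> h\<psi>))"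
  unfolding WUntil_def
  using indicates_sem_Or[OF indicates_sem_Box indicates_sem_Until, OF assms(1,2,4) assms] .

lemma indicates_top_sem_sbLTL:
  assumes V: "ioggpvm mult Val"
  shows "sbLTL \<phi> \<Longrightarrow> indicates top (sem mult Val \<phi>) (holds \<phi>)"
proof (induction \<phi> rule: sbLTL.induct)
  case (4 \<phi> \<psi>)
  from "4.IH" show ?case by (rule indicates_sem_Or)
next
  case (5 \<phi> \<psi>)
  then show ?case
    by (auto simp: indicates_def top_unique ioggpvm_bot_mult[OF V] ioggpvm_mult_bot[OF V]
        ioggpvm_mult_top[OF V])
next
  case (7 \<phi> \<psi>)
  then show ?case
    by (intro indicates_sem_WUntil[OF V] finite_range_indicates_top)
next
  case (8 \<phi>)
  then show ?case
    by (intro indicates_sem_Box[OF V] finite_range_indicates_top)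
qed (auto simp: indicates_def)

lemma mult_sem_sbLTL:
  assumes "ioggpvm mult Val" and "sbLTL \<phi>"
  shows "mult c (sem mult Val \<phi> w) = (if holds \<phi> w then c else bot)"
  using indicates_top_sem_sbLTL[OF assms] ioggpvm_mult_bot[OF assms(1)]
    ioggpvm_mult_top[OF assms(1)] by (auto simp: indicates_def top_unique)

lemma sem_stdisj_mem:
  assumes V: "ioggpvm mult Val"
  shows "\<forall>(c, \<phi>) \<in> set xs. sbLTL \<phi> \<Longrightarrow>
    sem mult Val (stdisj xs) w \<in> insert bot (fst ` set xs)"
  by (induction xs rule: stdisj.induct) (auto simp: mult_sem_sbLTL[OF V] sup_max max_def)

lemma indicates_sem_stdisj:
  assumes V: "ioggpvm mult Val"
  shows "\<forall>(c, \<phi>) \<in> set xs. k \<le> c \<and> sbLTL \<phi> \<Longrightarrow>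
    indicates k (sem mult Val (stdisj xs)) (holds (bdisj xs))"
proof (induction xs rule: stdisj.induct)
  case 1
  then show ?case by (simp add: indicates_def top_unique)
next
  case (2 c \<phi>)
  then show ?case by (simp add: indicates_def mult_sem_sbLTL[OF V])
next
  case (3 c \<phi> y ys)
  then have "indicates k (sem mult Val (And (Const c) \<phi>)) (holds \<phi>)"
    by (simp add: indicates_def mult_sem_sbLTL[OF V])
  moreover from "3.prems"
  have "indicates k (sem mult Val (stdisj (y # ys))) (holds (bdisj (y # ys)))"
    by (intro "3.IH") simp
  ultimately show ?case
    unfolding stdisj.simps bdisj.simps by (rule indicates_sem_Or)
qed

lemma kst_indicates:
  assumes "ioggpvm mult Val" and "kst k xs"
  shows "indicates k (sem mult Val (stdisj xs)) (holds (bdisj xs))"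
    and "finite (range (sem mult Val (stdisj xs)))"
proof -
  from assms(2) have "\<forall>(c, \<phi>) \<in> set xs. k \<le> c \<and> sbLTL \<phi>"
    by (auto simp: kst_def)
  then show "indicates k (sem mult Val (stdisj xs)) (holds (bdisj xs))"
    by (rule indicates_sem_stdisj[OF assms(1)])
  from \<open>\<forall>(c, \<phi>) \<in> set xs. k \<le> c \<and> sbLTL \<phi>\<close>
  have "range (sem mult Val (stdisj xs)) \<subseteq> insert bot (fst ` set xs)"
    using sem_stdisj_mem[OF assms(1)] by fast
  then show "finite (range (sem mult Val (stdisj xs)))"
    by (rule finite_subset) simp
qed

theorem lemma7:
  fixes mult :: "'k::complete_linorder \<Rightarrow> 'k \<Rightarrow> 'k"
    and Val :: "(nat \<Rightarrow> 'k) \<Rightarrow> 'k"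
    and k :: 'k
    and xs ys :: "('k \<times> ('a::finite, 'k) wltl) list"
    and w :: "nat \<Rightarrow> 'a set"
  assumes "ioggpvm mult Val"
    and "k \<noteq> bot" and "k \<noteq> top"
    and "kst k xs" and "kst k ys"
  shows "(k \<le> sem mult Val (WUntil (stdisj xs) (stdisj ys)) w
            \<longleftrightarrow> holds (WUntil (bdisj xs) (bdisj ys)) w)
       \<and> (k \<le> sem mult Val (Box (stdisj xs)) w
            \<longleftrightarrow> holds (Box (bdisj xs)) w)
       \<and> (k \<le> sem mult Val (Until (stdisj xs) (stdisj ys)) w
            \<longleftrightarrow> holds (Until (bdisj xs) (bdisj ys)) w)"
proof -
  have threshold: "k \<le> sem mult Val \<phi> w \<longleftrightarrow> holds h w"
    if "indicates k (sem mult Val \<phi>) (holds h)" for \<phi> h :: "('a, 'k) wltl"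
    using indicates_iff[OF that assms(2)] .
  note X = kst_indicates[OF assms(1,4)] and Y = kst_indicates[OF assms(1,5)]
  show ?thesis
    by (intro conjI threshold indicates_sem_WUntil indicates_sem_Box indicates_sem_Until
        assms(1) X Y)
qed

end
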